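(* Under the assumptions of the preceding lemma (two homomorphous MDPs with deterministic dynamics $T,T'$, $T'\in(T,\varepsilon_m)$, reward $\lambda_1$-Lipschitz in the action, $T$ and $T'$ $\lambda_2$-inverse Lipschitz in the action), suppose the action gap $\Delta$ satisfies $$\Delta>\frac{(2-\gamma)\lambda_1\lambda_2\varepsilon_m}{1-\gamma}.$$ Then $d^*_T(s)=d^*_{T'}(s)$ for all $s\in\mathcal S$.
   Context: Setting: An MDP has state space $\mathcal S$ (normed), action space $\mathcal A$ with the $\ell_1$ norm, deterministic dynamics $T:\mathcal S\times\mathcal A\to\mathcal S$, bounded reward $r(s,a,s')$, initial distribution $\rho_0$, discount $\gamma\in(0,1)$. $V^*_T(s)=\max_a[r(s,a,T(s,a))+\gamma V^*_T(T(s,a))]$, $Q^*_T(s,a)=r(s,a,T(s,a))+\gamma V^*_T(T(s,a))$, and $\pi^*_T(s)$ is the optimal (deterministic) action. Homomorphous MDPs share $\mathcal S,\mathcal A,r,\rho_0,\gamma$ and satisfy $\{T(s,a):a\in\mathcal A\}=\{T'(s,a):a\in\mathcal A\}$ for every $s$. $T'\in(T,\varepsilon_m)$ means $\|T(s,a)-T'(s,a)\|\le\varepsilon_m$ for all $(s,a)$. Lipschitz: $|r(s,a_1,s')-r(s,a_2,s')|\le\lambda_1\|a_1-a_2\|_1$; inverse Lipschitz: $\|a_1-a_2\|_1\le\lambda_2\|T(s,a_1)-T(s,a_2)\|$ (and likewise for $T'$). The action gap is $\Delta=\min_{\tilde T\in\{T,T'\}}\min_{s\in\mathcal S}\min_{a\neq\pi^*_{\tilde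 T}(s)}\left(V^*_{\tilde T}(s)-Q^*_{\tilde T}(s,a)\right)$. For a policy $\pi$, $d^\pi_T(s)=(1-\gamma)\sum_{t\ge0}\gamma^t p_T(s_t=s\mid\pi)$ is the discounted stationary state distribution under dynamics $T$ starting from $s_0\sim\rho_0$, and $d^*_T:=d^{\pi^*_T}_T$. *)

theory Defs
  imports "HOL-Probability.Probability"
begin

definition l1norm :: "real ^ 'n \<Rightarrow> real" where
  "l1norm a = (\<Sum>i\<in>UNIV. \<bar>a $ i\<bar>)"

definition Vstar ::
  "('s \<Rightarrow> 'act \<Rightarrow> 's) \<Rightarrow> ('s \<Rightarrow> 'act \<Rightarrow> 's \<Rightarrow> real) \<Rightarrow> real \<Rightarrow> 'act set \<Rightarrow> 's \<Rightarrow> real" where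
  "Vstar T r \<gamma> A = (THE V. bounded (range V) \<and>
      (\<forall>s. V s = (SUP a\<in>A. r s a (T s a) + \<gamma> * V (T s a))))"

definition Qstar ::
  "('s \<Rightarrow> 'act \<Rightarrow> 's) \<Rightarrow> ('s \<Rightarrow> 'act \<Rightarrow> 's \<Rightarrow> real) \<Rightarrow> real \<Rightarrow> 'act set \<Rightarrow> 's \<Rightarrow> 'act \<Rightarrow> real" where
  "Qstar T r \<gamma> A s a = r s a (T s a) + \<gamma> * Vstar T r \<gamma> A (T s a)"

definition pistar ::
  "('s \<Rightarrow> 'act \<Rightarrow> 's) \<Rightarrow> ('s \<Rightarrow> 'act \<Rightarrow> 's \<Rightarrow> real) \<Rightarrow> real \<Rightarrow> 'act set \<Rightarrow> 's \<Rightarrow> 'act" where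
  "pistar T r \<gamma> A s = (SOME a. a \<in> A \<and> Qstar T r \<gamma> A s a = Vstar T r \<gamma> A s)"

definition gap1 ::
  "('s \<Rightarrow> 'act \<Rightarrow> 's) \<Rightarrow> ('s \<Rightarrow> 'act \<Rightarrow> 's \<Rightarrow> real) \<Rightarrow> real \<Rightarrow> 'act set \<Rightarrow> real" where
  "gap1 T r \<gamma> A = Inf {Vstar T r \<gamma> A s - Qstar T r \<gamma> A s a | s a.
                        a \<in> A \<and> a \<noteq> pistar T r \<gamma> A s}"

definition action_gap ::
  "('s \<Rightarrow> 'act \<Rightarrow> 's) \<Rightarrow> ('s \<Rightarrow> 'act \<Rightarrow> 's) \<Rightarrow> ('s \<Rightarrow> 'act \<Rightarrow> 's \<Rightarrow> real) \<Rightarrow> real \<Rightarrow> 'act set \<Rightarrow> real" where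
  "action_gap T T' r \<gamma> A = min (gap1 T r \<gamma> A) (gap1 T' r \<gamma> A)"

primrec traj :: "('s \<Rightarrow> 'act \<Rightarrow> 's) \<Rightarrow> ('s \<Rightarrow> 'act) \<Rightarrow> 's \<Rightarrow> nat \<Rightarrow> 's" where
  "traj T \<pi> s0 0 = s0"
| "traj T \<pi> s0 (Suc t) = T (traj T \<pi> s0 t) (\<pi> (traj T \<pi> s0 t))"

definition dstat :: "('s \<Rightarrow> 'act \<Rightarrow> 's) \<Rightarrow> ('s \<Rightarrow> 'act) \<Rightarrow> 's measure \<Rightarrow> real \<Rightarrow> 's \<Rightarrow> real" where
  "dstat T \<pi> rho0 \<gamma> s = (1 - \<gamma>) * (\<Sum>t. \<gamma> ^ t * measure rho0 {s0 \<in> space rho0. traj T \<pi> s0 t = s})"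

end

theory Submission
  imports Defs
begin

text \<open>
  Each optimal value function is the unique bounded fixed point of its Bellman operator, a
  \<open>\<gamma>\<close>-contraction in the sup norm. Since the MDPs are homomorphous, the successor \<open>T s a\<close> is
  also reached under \<open>T'\<close> by an action \<open>b\<close> with \<open>\<parallel>a - b\<parallel>\<^sub>1 \<le> \<lambda>\<^sub>2\<epsilon>\<^sub>m\<close> (inverse Lipschitz
  property), at a reward loss of at most \<open>c = \<lambda>\<^sub>1\<lambda>\<^sub>2\<epsilon>\<^sub>m\<close>. Comparing Bellman equations gives
  \<open>\<bar>V\<^sup>*\<^sub>T - V\<^sup>*\<^sub>T\<^sub>'\<bar> \<le> c/(1-\<gamma>)\<close>, and so every \<open>Q\<^sup>*\<close>-value of one MDP is matched, up to
  \<open>c/(1-\<gamma>)\<close>, by a \<open>Q\<^sup>*\<close>-value with the same successor in the other. If the greedy successors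
  differed at some state, each of them would be reached by a non-greedy action of the other
  MDP, and adding the two action-gap inequalities would give \<open>2\<Delta> \<le> 2c/(1-\<gamma>)\<close>. Hence both
  greedy policies generate the same trajectories, and the discounted state distributions agree.
\<close>

lemma cSUP_le_cSUP_add:
  fixes f g :: "'a \<Rightarrow> real"
  assumes "A \<noteq> {}" "bdd_above (g ` A)" "\<And>a. a \<in> A \<Longrightarrow> f a \<le> g a + e"
  shows "(SUP a\<in>A. f a) \<le> (SUP a\<in>A. g a) + e"
proof (rule cSUP_least[OF assms(1)])
  fix a assume "a \<in> A"
  then show "f a \<le> (SUP a\<in>A. g a) + e"
    using assms(3) cSUP_upper[OF _ assms(2)] by (meson add_right_mono order_trans)
qed

lemma cSUP_abs_diff_le:
  fixes f g :: "'a \<Rightarrow> real"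
  assumes A: "A \<noteq> {}" and g: "bdd_above (g ` A)" and fg: "\<And>a. a \<in> A \<Longrightarrow> \<bar>f a - g a\<bar> \<le> e"
  shows "\<bar>(SUP a\<in>A. f a) - (SUP a\<in>A. g a)\<bar> \<le> e"
proof -
  have f: "bdd_above (f ` A)"
  proof -
    obtain M where M: "\<And>a. a \<in> A \<Longrightarrow> g a \<le> M" using g by (auto simp: bdd_above_def)
    have "f a \<le> M + e" if "a \<in> A" for a
      using fg[OF that, unfolded abs_le_iff] M[OF that] by linarith
    then show ?thesis by (rule bdd_aboveI2)
  qed
  have fg': "f a \<le> g a + e" "g a \<le> f a + e" if "a \<in> A" for a
    using fg[OF that] by (auto simp: abs_le_iff)
  have "(SUP a\<in>A. f a) \<le> (SUP a\<in>A. g a) + e"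
    by (rule cSUP_le_cSUP_add[OF A g fg'(1)])
  moreover have "(SUP a\<in>A. g a) \<le> (SUP a\<in>A. f a) + e"
    by (rule cSUP_le_cSUP_add[OF A f fg'(2)])
  ultimately show ?thesis by (simp add: abs_le_iff)
qed

lemma abs_le_of_self_bound:
  fixes u :: "'a \<Rightarrow> real"
  assumes bounded: "\<And>y. \<bar>u y\<bar> \<le> M" and \<gamma>: "\<gamma> < 1"
    and self_bound: "\<And>D x. (\<And>y. \<bar>u y\<bar> \<le> D) \<Longrightarrow> \<bar>u x\<bar> \<le> c + \<gamma> * D"
  shows "\<bar>u x\<bar> \<le> c / (1 - \<gamma>)"
proof -
  define D where "D = (SUP y. \<bar>u y\<bar>)"
  have D: "\<bar>u y\<bar> \<le> D" for y
    unfolding D_def by (rule cSUP_upper) (simp_all add: bdd_aboveI2[of _ _ M] bounded)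
  have "D \<le> c + \<gamma> * D"
    unfolding D_def by (rule cSUP_least) (use self_bound D in \<open>auto simp: D_def\<close>)
  then have "D \<le> c / (1 - \<gamma>)"
    using \<gamma> by (simp add: field_simps)
  with D show ?thesis by (rule order_trans)
qed

lemma geometric_Cauchy_limit:
  fixes X :: "nat \<Rightarrow> real"
  assumes \<gamma>: "0 \<le> \<gamma>" "\<gamma> < 1" and tail: "\<And>m n. n \<le> m \<Longrightarrow> \<bar>X m - X n\<bar> \<le> C * \<gamma> ^ n"
  shows "\<exists>L. X \<longlonglongrightarrow> L \<and> (\<forall>n. \<bar>L - X n\<bar> \<le> C * \<gamma> ^ n)"
proof -
  have "(\<lambda>n. C * \<gamma> ^ n) \<longlonglongrightarrow> 0"
    using \<gamma> by (intro tendsto_mult_right_zero LIMSEQ_power_zero) simp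
  have "Cauchy X"
  proof (rule metric_CauchyI)
    fix e :: real assume "0 < e"
    with \<open>(\<lambda>n. C * \<gamma> ^ n) \<longlonglongrightarrow> 0\<close> obtain N where N: "\<And>n. N \<le> n \<Longrightarrow> \<bar>C * \<gamma> ^ n\<bar> < e"
      by (auto simp: lim_sequentially dist_real_def)
    have "dist (X m) (X n) < e" if "N \<le> m" "N \<le> n" for m n
    proof (cases "n \<le> m")
      case True
      then show ?thesis
        using tail[OF True] N[OF that(2)] abs_ge_self[of "C * \<gamma> ^ n"]
        unfolding dist_real_def by linarith
    next
      case False
      then have mn: "m \<le> n" by simp
      show ?thesis
        using tail[OF mn] N[OF that(1)] abs_ge_self[of "C * \<gamma> ^ m"]
        unfolding dist_real_def by (simp add: abs_minus_commute)
    qed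
    then show "\<exists>N. \<forall>m\<ge>N. \<forall>n\<ge>N. dist (X m) (X n) < e" by blast
  qed
  then obtain L where L: "X \<longlonglongrightarrow> L"
    by (auto simp: Cauchy_convergent_iff convergent_def)
  have "\<bar>L - X n\<bar> \<le> C * \<gamma> ^ n" for n
  proof (rule LIMSEQ_le_const2)
    show "(\<lambda>m. \<bar>X m - X n\<bar>) \<longlonglongrightarrow> \<bar>L - X n\<bar>" by (intro tendsto_intros L)
  qed (use tail in auto)
  with L show ?thesis by blast
qed

lemma abs_add_mult_le:
  fixes x y :: real
  assumes "\<bar>x\<bar> \<le> B" "\<bar>y\<bar> \<le> M" "0 \<le> \<gamma>"
  shows "\<bar>x + \<gamma> * y\<bar> \<le> B + \<gamma> * M"
proof -
  have "\<bar>\<gamma> * y\<bar> \<le> \<gamma> * M"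
    using assms(2,3) by (simp add: abs_mult mult_left_mono)
  then show ?thesis
    using assms(1) abs_triangle_ineq[of x "\<gamma> * y"] by linarith
qed

definition bellman_op ::
  "('s \<Rightarrow> 'a \<Rightarrow> 's) \<Rightarrow> ('s \<Rightarrow> 'a \<Rightarrow> 's \<Rightarrow> real) \<Rightarrow> real \<Rightarrow> 'a set \<Rightarrow> ('s \<Rightarrow> real) \<Rightarrow> 's \<Rightarrow> real" where
  "bellman_op T r \<gamma> A V s = (SUP a\<in>A. r s a (T s a) + \<gamma> * V (T s a))"

locale bounded_mdp =
  fixes T :: "'s \<Rightarrow> 'a \<Rightarrow> 's" and r :: "'s \<Rightarrow> 'a \<Rightarrow> 's \<Rightarrow> real"
    and \<gamma> :: real and A :: "'a set" and B :: real
  assumes actions_nonempty: "A \<noteq> {}"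
    and discount_nonneg: "0 \<le> \<gamma>" and discount_less_one: "\<gamma> < 1"
    and reward_bounded: "\<bar>r s a s'\<bar> \<le> B"
begin

lemma bellman_op_abs_le:
  assumes "\<And>x. \<bar>V x\<bar> \<le> M"
  shows "\<bar>bellman_op T r \<gamma> A V s\<bar> \<le> B + \<gamma> * M"
proof -
  have "\<bar>(SUP a\<in>A. r s a (T s a) + \<gamma> * V (T s a)) - (SUP a\<in>A. 0)\<bar> \<le> B + \<gamma> * M"
  proof (rule cSUP_abs_diff_le[OF actions_nonempty])
    show "bdd_above ((\<lambda>a. 0) ` A)" by (rule bdd_aboveI2[of _ _ 0]) simp
  qed (simp add: abs_add_mult_le[OF reward_bounded assms discount_nonneg])
  then show ?thesis
    using actions_nonempty by (simp add: bellman_op_def)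
qed

lemma bellman_op_abs_diff_le:
  assumes "\<And>x. \<bar>V2 x\<bar> \<le> M" and "\<And>x. \<bar>V1 x - V2 x\<bar> \<le> d"
  shows "\<bar>bellman_op T r \<gamma> A V1 s - bellman_op T r \<gamma> A V2 s\<bar> \<le> \<gamma> * d"
  unfolding bellman_op_def
proof (rule cSUP_abs_diff_le[OF actions_nonempty])
  show "bdd_above ((\<lambda>a. r s a (T s a) + \<gamma> * V2 (T s a)) ` A)"
    using abs_add_mult_le[OF reward_bounded assms(1) discount_nonneg]
    by (intro bdd_aboveI2[of _ _ "B + \<gamma> * M"]) (simp add: abs_le_iff)
  show "\<bar>r s a (T s a) + \<gamma> * V1 (T s a) - (r s a (T s a) + \<gamma> * V2 (T s a))\<bar> \<le> \<gamma> * d" for a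
    using assms(2)[of "T s a"] discount_nonneg
    by (simp add: abs_mult mult_left_mono flip: right_diff_distrib)
qed

lemma bellman_op_fixpoint_unique:
  assumes "\<And>x. \<bar>V1 x\<bar> \<le> M1" "\<And>x. \<bar>V2 x\<bar> \<le> M2"
    and "bellman_op T r \<gamma> A V1 = V1" "bellman_op T r \<gamma> A V2 = V2"
  shows "V1 = V2"
proof
  fix x
  have "\<bar>V1 x - V2 x\<bar> \<le> 0 / (1 - \<gamma>)"
  proof (rule abs_le_of_self_bound[of "\<lambda>x. V1 x - V2 x" "M1 + M2" \<gamma> 0, OF _ discount_less_one])
    show "\<bar>V1 y - V2 y\<bar> \<le> M1 + M2" for y
      using assms(1,2)[of y] by linarith
    show "\<bar>V1 z - V2 z\<bar> \<le> 0 + \<gamma> * D" if "\<And>y. \<bar>V1 y - V2 y\<bar> \<le> D" for D z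
      using bellman_op_abs_diff_le[of V2 M2 V1 D z] assms(2-4) that by simp
  qed
  then show "V1 x = V2 x" by simp
qed

lemma bellman_op_iterate_abs_le: "\<bar>(bellman_op T r \<gamma> A ^^ n) (\<lambda>_. 0) x\<bar> \<le> B / (1 - \<gamma>)"
proof (induction n arbitrary: x)
  case 0
  have "0 \<le> B" using order_trans[OF abs_ge_zero reward_bounded] .
  then show ?case using discount_less_one by simp
next
  case (Suc n)
  have "B + \<gamma> * (B / (1 - \<gamma>)) = B / (1 - \<gamma>)"
    using discount_less_one by (simp add: field_simps)
  with bellman_op_abs_le[OF Suc] show ?case by simp
qed

lemma bellman_op_iterate_tail:
  "\<bar>(bellman_op T r \<gamma> A ^^ (n + j)) (\<lambda>_. 0) x - (bellman_op T r \<gamma> A ^^ n) (\<lambda>_. 0) x\<bar>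
    \<le> B / (1 - \<gamma>) * \<gamma> ^ n"
proof (induction n arbitrary: x)
  case 0
  then show ?case using bellman_op_iterate_abs_le by simp
next
  case (Suc n)
  then show ?case
    using bellman_op_abs_diff_le[OF bellman_op_iterate_abs_le Suc, where s = x]
    by (simp add: mult.left_commute)
qed

lemma bellman_op_fixpoint_exists:
  "\<exists>V. (\<forall>x. \<bar>V x\<bar> \<le> B / (1 - \<gamma>)) \<and> bellman_op T r \<gamma> A V = V"
proof -
  define K where "K = B / (1 - \<gamma>)"
  define Vs where "Vs n = (bellman_op T r \<gamma> A ^^ n) (\<lambda>_. 0)" for n
  have Vs_Suc: "Vs (Suc n) = bellman_op T r \<gamma> A (Vs n)" for n
    by (simp add: Vs_def)
  have Vs_bound: "\<bar>Vs n x\<bar> \<le> K" for n x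
    unfolding Vs_def K_def by (rule bellman_op_iterate_abs_le)
  have Vs_tail: "\<bar>Vs m x - Vs n x\<bar> \<le> K * \<gamma> ^ n" if "n \<le> m" for m n x
    using bellman_op_iterate_tail[of n "m - n" x] that by (simp add: Vs_def K_def)
  have "\<exists>L. (\<lambda>n. Vs n x) \<longlonglongrightarrow> L \<and> (\<forall>n. \<bar>L - Vs n x\<bar> \<le> K * \<gamma> ^ n)" for x
    by (rule geometric_Cauchy_limit[OF discount_nonneg discount_less_one Vs_tail])
  then obtain W where W: "\<And>x. \<bar>W x - Vs n x\<bar> \<le> K * \<gamma> ^ n" for n
    by metis
  have W_bound: "\<bar>W x\<bar> \<le> K" for x
    using W[of x 0] by (simp add: Vs_def)
  have "bellman_op T r \<gamma> A W = W"
  proof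
    fix s
    have bound: "\<bar>bellman_op T r \<gamma> A W s - W s\<bar> \<le> 2 * (K * \<gamma> ^ Suc n)" for n
    proof -
      have "\<bar>bellman_op T r \<gamma> A W s - bellman_op T r \<gamma> A (Vs n) s\<bar> \<le> K * \<gamma> ^ Suc n"
        using bellman_op_abs_diff_le[of "Vs n" K W "K * \<gamma> ^ n" s] Vs_bound W[of _ n]
        by (simp add: mult.left_commute)
      moreover have "\<bar>bellman_op T r \<gamma> A (Vs n) s - W s\<bar> \<le> K * \<gamma> ^ Suc n"
        using W[of s "Suc n"] by (simp add: Vs_Suc abs_minus_commute)
      ultimately show ?thesis by linarith
    qed
    have "(\<lambda>n. 2 * (K * \<gamma> ^ Suc n)) \<longlonglongrightarrow> 0"
      using discount_nonneg discount_less_one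
      by (intro tendsto_mult_right_zero LIMSEQ_power_zero LIMSEQ_Suc) simp
    then have "\<bar>bellman_op T r \<gamma> A W s - W s\<bar> \<le> 0"
      by (rule LIMSEQ_le_const) (use bound in blast)
    then show "bellman_op T r \<gamma> A W s = W s" by simp
  qed
  with W_bound show ?thesis unfolding K_def by blast
qed

lemma Vstar_bounded: "\<exists>M. \<forall>x. \<bar>Vstar T r \<gamma> A x\<bar> \<le> M"
  and bellman_op_Vstar: "bellman_op T r \<gamma> A (Vstar T r \<gamma> A) = Vstar T r \<gamma> A"
proof -
  obtain W where W: "\<And>x. \<bar>W x\<bar> \<le> B / (1 - \<gamma>)" "bellman_op T r \<gamma> A W = W"
    using bellman_op_fixpoint_exists by blast
  have "Vstar T r \<gamma> A = W"
    unfolding Vstar_def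
  proof (rule the_equality)
    show "bounded (range W) \<and> (\<forall>s. W s = (SUP a\<in>A. r s a (T s a) + \<gamma> * W (T s a)))"
      using W by (auto simp: bounded_iff bellman_op_def fun_eq_iff)
    fix V assume V: "bounded (range V) \<and> (\<forall>s. V s = (SUP a\<in>A. r s a (T s a) + \<gamma> * V (T s a)))"
    obtain M where M: "\<And>x. \<bar>V x\<bar> \<le> M"
      using conjunct1[OF V] by (auto simp: bounded_iff)
    have "bellman_op T r \<gamma> A V = V"
      unfolding bellman_op_def by (rule ext sym[OF spec[OF conjunct2[OF V]]])+
    then show "V = W"
      by (rule bellman_op_fixpoint_unique[OF M W(1) _ W(2)])
  qed
  with W show "\<exists>M. \<forall>x. \<bar>Vstar T r \<gamma> A x\<bar> \<le> M" "bellman_op T r \<gamma> A (Vstar T r \<gamma> A) = Vstar T r \<gamma> A"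
    by auto
qed

lemma Vstar_eq_SUP_Qstar: "Vstar T r \<gamma> A s = (SUP a\<in>A. Qstar T r \<gamma> A s a)"
  using bellman_op_Vstar by (simp add: fun_eq_iff bellman_op_def Qstar_def)

lemma bdd_above_Qstar: "bdd_above (Qstar T r \<gamma> A s ` A)"
proof -
  obtain M where M: "\<And>x. \<bar>Vstar T r \<gamma> A x\<bar> \<le> M" using Vstar_bounded by blast
  show ?thesis unfolding Qstar_def
    using abs_add_mult_le[OF reward_bounded M discount_nonneg]
    by (intro bdd_aboveI2[of _ _ "B + \<gamma> * M"]) (simp add: abs_le_iff)
qed

lemma Qstar_le_Vstar: "a \<in> A \<Longrightarrow> Qstar T r \<gamma> A s a \<le> Vstar T r \<gamma> A s"
  unfolding Vstar_eq_SUP_Qstar[of s] by (rule cSUP_upper[OF _ bdd_above_Qstar])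

lemma gap1_le:
  assumes "a \<in> A" "a \<noteq> pistar T r \<gamma> A s"
  shows "gap1 T r \<gamma> A \<le> Vstar T r \<gamma> A s - Qstar T r \<gamma> A s a"
  unfolding gap1_def
proof (rule cInf_lower)
  show "bdd_below {Vstar T r \<gamma> A s - Qstar T r \<gamma> A s a |s a. a \<in> A \<and> a \<noteq> pistar T r \<gamma> A s}"
    using Qstar_le_Vstar by (intro bdd_belowI[of _ 0]) force
qed (use assms in blast)

lemma pistar_optimal:
  assumes "0 < gap1 T r \<gamma> A"
  shows "pistar T r \<gamma> A s \<in> A" and "Qstar T r \<gamma> A s (pistar T r \<gamma> A s) = Vstar T r \<gamma> A s"
proof -
  let ?V = "Vstar T r \<gamma> A s" and ?Q = "Qstar T r \<gamma> A s" and ?\<pi> = "pistar T r \<gamma> A s"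
  have "\<exists>a\<in>A. ?Q a = ?V"
  proof (rule ccontr)
    assume "\<not> (\<exists>a\<in>A. ?Q a = ?V)"
    then have Q_less: "?Q a < ?V" if "a \<in> A" for a
      using Qstar_le_Vstar[OF that] that by (auto simp: order_le_less)
    have sup: "x < ?V \<longleftrightarrow> (\<exists>a\<in>A. x < ?Q a)" for x
      unfolding Vstar_eq_SUP_Qstar[of s] by (rule less_cSUP_iff[OF actions_nonempty bdd_above_Qstar])
    obtain a1 where a1: "a1 \<in> A" "?V - gap1 T r \<gamma> A < ?Q a1"
      using sup[of "?V - gap1 T r \<gamma> A"] assms by auto
    obtain a2 where a2: "a2 \<in> A" "?Q a1 < ?Q a2"
      using sup[of "?Q a1"] Q_less[OF a1(1)] by auto
    have "\<exists>a\<in>A. a \<noteq> ?\<pi> \<and> ?V - ?Q a < gap1 T r \<gamma> A"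
    proof (cases "a1 = ?\<pi>")
      case True
      then have "a2 \<noteq> ?\<pi>" using a2(2) by auto
      with a1(2) a2 show ?thesis by (intro bexI[of _ a2]) auto
    qed (use a1 in auto)
    then show False using gap1_le by force
  qed
  then obtain a where "a \<in> A" "?Q a = ?V" by blast
  then have "?\<pi> \<in> A \<and> ?Q ?\<pi> = ?V"
    unfolding pistar_def using someI[of "\<lambda>a. a \<in> A \<and> ?Q a = ?V" a] by blast
  then show "?\<pi> \<in> A" "?Q ?\<pi> = ?V" by auto
qed

lemma pistar_singleton:
  assumes "A = {a}"
  shows "pistar T r \<gamma> A s = a"
  unfolding pistar_def
  by (rule some_equality) (use assms Vstar_eq_SUP_Qstar[of s] in auto)

end

lemma l1norm_diff_pos:
  fixes a b :: "real ^ 'n"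
  assumes "a \<noteq> b"
  shows "0 < l1norm (a - b)"
proof -
  have "l1norm (a - b) \<noteq> 0"
  proof
    assume "l1norm (a - b) = 0"
    then have "\<forall>i. \<bar>(a - b) $ i\<bar> = 0"
      unfolding l1norm_def by (subst (asm) sum_nonneg_eq_0_iff) auto
    with assms show False by (simp add: vec_eq_iff)
  qed
  moreover have "0 \<le> l1norm (a - b)"
    unfolding l1norm_def by (simp add: sum_nonneg)
  ultimately show ?thesis by linarith
qed

lemma nonneg_of_le_mult_l1norm:
  fixes a1 a2 :: "real ^ 'n"
  assumes "a1 \<noteq> a2" "\<bar>x\<bar> \<le> lam * l1norm (a1 - a2)"
  shows "0 \<le> lam"
  using order_trans[OF abs_ge_zero assms(2)] l1norm_diff_pos[OF assms(1)]
  by (simp add: zero_le_mult_iff)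

lemma nonneg_of_l1norm_le_mult:
  fixes a1 a2 :: "real ^ 'n"
  assumes "a1 \<noteq> a2" "l1norm (a1 - a2) \<le> lam * y" "0 \<le> y"
  shows "0 \<le> lam"
  using less_le_trans[OF l1norm_diff_pos[OF assms(1)] assms(2)] assms(3)
  by (simp add: zero_less_mult_iff)

locale homomorphous_mdps =
  M: bounded_mdp T r \<gamma> A B + M': bounded_mdp T' r \<gamma> A B
  for T T' :: "'s::real_normed_vector \<Rightarrow> real ^ 'n \<Rightarrow> 's"
    and r :: "'s \<Rightarrow> real ^ 'n \<Rightarrow> 's \<Rightarrow> real" and \<gamma> A B +
  fixes eps lam1 lam2 :: real
  assumes homomorphous: "T s ` A = T' s ` A"
    and close: "a \<in> A \<Longrightarrow> norm (T s a - T' s a) \<le> eps"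
    and reward_lipschitz:
      "a1 \<in> A \<Longrightarrow> a2 \<in> A \<Longrightarrow> \<bar>r s a1 s' - r s a2 s'\<bar> \<le> lam1 * l1norm (a1 - a2)"
    and T_inverse_lipschitz:
      "a1 \<in> A \<Longrightarrow> a2 \<in> A \<Longrightarrow> l1norm (a1 - a2) \<le> lam2 * norm (T s a1 - T s a2)"
    and T'_inverse_lipschitz:
      "a1 \<in> A \<Longrightarrow> a2 \<in> A \<Longrightarrow> l1norm (a1 - a2) \<le> lam2 * norm (T' s a1 - T' s a2)"
    and lam1_nonneg: "0 \<le> lam1" and lam2_nonneg: "0 \<le> lam2"
begin

lemma homomorphous_mdps_swap: "homomorphous_mdps T' T r \<gamma> A B eps lam1 lam2"
proof (rule homomorphous_mdps.intro[OF M'.bounded_mdp_axioms M.bounded_mdp_axioms],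
    rule homomorphous_mdps_axioms.intro)
  show "T' s ` A = T s ` A" for s
    by (rule homomorphous[symmetric])
  show "norm (T' s a - T s a) \<le> eps" if "a \<in> A" for s a
    using close[OF that] by (simp add: norm_minus_commute)
qed (simp_all add: reward_lipschitz T_inverse_lipschitz T'_inverse_lipschitz lam1_nonneg lam2_nonneg)

lemma successor_reachable:
  assumes "a \<in> A"
  obtains b where "b \<in> A" "T' s b = T s a"
proof -
  have "T s a \<in> T' s ` A"
    using assms homomorphous[of s] by blast
  then obtain b where "T s a = T' s b" "b \<in> A"
    by (rule imageE)
  then show ?thesis using that[of b] by simp
qed

lemma eps_nonneg: "0 \<le> eps"
proof -
  obtain a where "a \<in> A" using M.actions_nonempty by blast
  then show ?thesis by (rule order_trans[OF norm_ge_zero close])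
qed

lemma reward_diff_le_of_same_successor:
  assumes "a \<in> A" "b \<in> A" "T s a = T' s b"
  shows "\<bar>r s a s' - r s b s'\<bar> \<le> lam1 * lam2 * eps"
proof -
  have "l1norm (a - b) \<le> lam2 * norm (T' s a - T' s b)"
    using T'_inverse_lipschitz assms(1,2) .
  also have "\<dots> = lam2 * norm (T s a - T' s a)"
    by (simp add: assms(3) norm_minus_commute)
  also have "\<dots> \<le> lam2 * eps"
    using close[OF assms(1)] lam2_nonneg by (rule mult_left_mono)
  finally have "l1norm (a - b) \<le> lam2 * eps" .
  have "\<bar>r s a s' - r s b s'\<bar> \<le> lam1 * l1norm (a - b)"
    by (rule reward_lipschitz[OF assms(1,2)])
  also have "\<dots> \<le> lam1 * (lam2 * eps)"
    using \<open>l1norm (a - b) \<le> lam2 * eps\<close> lam1_nonneg by (rule mult_left_mono)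
  finally show ?thesis by (simp add: mult.assoc)
qed

lemma Qstar_same_successor_le_shift:
  assumes V_diff: "\<And>x. \<bar>Vstar T r \<gamma> A x - Vstar T' r \<gamma> A x\<bar> \<le> D"
    and a: "a \<in> A" and b: "b \<in> A" and succ: "T s a = T' s b"
  shows "Qstar T r \<gamma> A s a \<le> Qstar T' r \<gamma> A s b + lam1 * lam2 * eps + \<gamma> * D"
proof -
  let ?x = "T s a"
  have "Vstar T r \<gamma> A ?x \<le> Vstar T' r \<gamma> A ?x + D"
    using V_diff[of ?x, unfolded abs_le_iff] by linarith
  then have "\<gamma> * Vstar T r \<gamma> A ?x \<le> \<gamma> * (Vstar T' r \<gamma> A ?x + D)"
    using M.discount_nonneg by (rule mult_left_mono)
  then have "\<gamma> * Vstar T r \<gamma> A ?x \<le> \<gamma> * Vstar T' r \<gamma> A ?x + \<gamma> * D"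
    by (simp add: distrib_left)
  moreover have "r s a ?x \<le> r s b ?x + lam1 * lam2 * eps"
    using reward_diff_le_of_same_successor[OF a b succ, of ?x, unfolded abs_le_iff] by linarith
  ultimately show ?thesis
    unfolding Qstar_def succ[symmetric] by linarith
qed

lemma Vstar_le_shift:
  assumes V_diff: "\<And>x. \<bar>Vstar T r \<gamma> A x - Vstar T' r \<gamma> A x\<bar> \<le> D"
  shows "Vstar T r \<gamma> A s \<le> Vstar T' r \<gamma> A s + lam1 * lam2 * eps + \<gamma> * D"
  unfolding M.Vstar_eq_SUP_Qstar[of s]
proof (rule cSUP_least[OF M.actions_nonempty])
  fix a assume a: "a \<in> A"
  then obtain b where b: "b \<in> A" "T' s b = T s a"
    by (rule successor_reachable)
  have "Qstar T r \<gamma> A s a \<le> Qstar T' r \<gamma> A s b + lam1 * lam2 * eps + \<gamma> * D"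
    by (rule Qstar_same_successor_le_shift[OF V_diff a b(1) b(2)[symmetric]])
  also have "\<dots> \<le> Vstar T' r \<gamma> A s + lam1 * lam2 * eps + \<gamma> * D"
    using M'.Qstar_le_Vstar[OF b(1)] by simp
  finally show "Qstar T r \<gamma> A s a \<le> Vstar T' r \<gamma> A s + lam1 * lam2 * eps + \<gamma> * D" .
qed

lemma Vstar_diff_le: "\<bar>Vstar T r \<gamma> A s - Vstar T' r \<gamma> A s\<bar> \<le> lam1 * lam2 * eps / (1 - \<gamma>)"
proof -
  obtain M1 M2 where M1: "\<And>x. \<bar>Vstar T r \<gamma> A x\<bar> \<le> M1" and M2: "\<And>x. \<bar>Vstar T' r \<gamma> A x\<bar> \<le> M2"
    using M.Vstar_bounded M'.Vstar_bounded by blast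
  show ?thesis
  proof (rule abs_le_of_self_bound[of "\<lambda>x. Vstar T r \<gamma> A x - Vstar T' r \<gamma> A x" "M1 + M2" \<gamma>,
        OF _ M.discount_less_one])
    show "\<bar>Vstar T r \<gamma> A x - Vstar T' r \<gamma> A x\<bar> \<le> M1 + M2" for x
      using M1[of x] M2[of x] by linarith
    show "\<bar>Vstar T r \<gamma> A x - Vstar T' r \<gamma> A x\<bar> \<le> lam1 * lam2 * eps + \<gamma> * D"
      if "\<And>y. \<bar>Vstar T r \<gamma> A y - Vstar T' r \<gamma> A y\<bar> \<le> D" for D x
      using Vstar_le_shift[OF that, of x]
        homomorphous_mdps.Vstar_le_shift[OF homomorphous_mdps_swap, of D x] that
      by (auto simp: abs_le_iff abs_minus_commute)
  qed
qed

lemma Qstar_same_successor_le: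
  assumes "a \<in> A" "b \<in> A" "T s a = T' s b"
  shows "Qstar T r \<gamma> A s a \<le> Qstar T' r \<gamma> A s b + lam1 * lam2 * eps / (1 - \<gamma>)"
proof -
  have "lam1 * lam2 * eps + \<gamma> * (lam1 * lam2 * eps / (1 - \<gamma>)) = lam1 * lam2 * eps / (1 - \<gamma>)"
    using M.discount_less_one by (simp add: field_simps)
  with Qstar_same_successor_le_shift[OF Vstar_diff_le assms] show ?thesis by simp
qed

text \<open>Adding the gap inequalities of both MDPs at a state where the greedy successors differ,
  the optimal values cancel; hence a gap above \<open>\<lambda>\<^sub>1\<lambda>\<^sub>2\<epsilon>/(1-\<gamma>)\<close> already suffices.\<close>
lemma greedy_successors_eq:
  assumes gap: "lam1 * lam2 * eps / (1 - \<gamma>) < action_gap T T' r \<gamma> A"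
  shows "T s (pistar T r \<gamma> A s) = T' s (pistar T' r \<gamma> A s)"
proof (rule ccontr)
  define X where "X = lam1 * lam2 * eps / (1 - \<gamma>)"
  have "0 \<le> X"
    using lam1_nonneg lam2_nonneg eps_nonneg M.discount_less_one by (simp add: X_def)
  have gaps: "X < gap1 T r \<gamma> A" "X < gap1 T' r \<gamma> A"
    using gap by (auto simp: action_gap_def X_def)
  let ?\<pi> = "pistar T r \<gamma> A s" and ?\<pi>' = "pistar T' r \<gamma> A s"
  have \<pi>: "?\<pi> \<in> A" "Qstar T r \<gamma> A s ?\<pi> = Vstar T r \<gamma> A s"
    using M.pistar_optimal gaps(1) \<open>0 \<le> X\<close> by auto
  have \<pi>': "?\<pi>' \<in> A" "Qstar T' r \<gamma> A s ?\<pi>' = Vstar T' r \<gamma> A s"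
    using M'.pistar_optimal gaps(2) \<open>0 \<le> X\<close> by auto
  assume ne: "T s ?\<pi> \<noteq> T' s ?\<pi>'"
  obtain a where a: "a \<in> A" "T' s a = T s ?\<pi>"
    using successor_reachable[OF \<pi>(1)] .
  obtain b where b: "b \<in> A" "T s b = T' s ?\<pi>'"
    using homomorphous_mdps.successor_reachable[OF homomorphous_mdps_swap \<pi>'(1)] .
  have "b \<noteq> ?\<pi>" "a \<noteq> ?\<pi>'"
    using a(2) b(2) ne by auto
  then have "gap1 T r \<gamma> A \<le> Vstar T r \<gamma> A s - Qstar T r \<gamma> A s b"
    and "gap1 T' r \<gamma> A \<le> Vstar T' r \<gamma> A s - Qstar T' r \<gamma> A s a"
    using M.gap1_le[OF b(1)] M'.gap1_le[OF a(1)] by auto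
  moreover have "Vstar T r \<gamma> A s \<le> Qstar T' r \<gamma> A s a + X"
    using Qstar_same_successor_le[OF \<pi>(1) a(1) a(2)[symmetric]] \<pi>(2) by (simp add: X_def)
  moreover have "Vstar T' r \<gamma> A s \<le> Qstar T r \<gamma> A s b + X"
    using homomorphous_mdps.Qstar_same_successor_le[OF homomorphous_mdps_swap \<pi>'(1) b(1) b(2)[symmetric]]
      \<pi>'(2)
    by (simp add: X_def)
  ultimately show False
    using gaps by linarith
qed

lemma gap_threshold_le:
  "lam1 * lam2 * eps / (1 - \<gamma>) \<le> (2 - \<gamma>) * lam1 * lam2 * eps / (1 - \<gamma>)"
proof -
  have "0 \<le> lam1 * lam2 * eps"
    using eps_nonneg lam1_nonneg lam2_nonneg by simp
  then have "lam1 * lam2 * eps \<le> (2 - \<gamma>) * lam1 * lam2 * eps"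
    using mult_right_mono[of 1 "2 - \<gamma>" "lam1 * lam2 * eps"] M.discount_less_one
    by (simp add: mult.assoc)
  then show ?thesis
    using M.discount_less_one by (simp add: divide_right_mono)
qed

end

theorem mainTheorem2:
  fixes T T' :: "'s::real_normed_vector \<Rightarrow> real ^ 'n \<Rightarrow> 's"
    and r :: "'s \<Rightarrow> real ^ 'n \<Rightarrow> 's \<Rightarrow> real"
    and A :: "(real ^ 'n) set"
    and rho0 :: "'s measure"
    and \<gamma> eps_m lam1 lam2 :: real
  assumes A_ne: "A \<noteq> {}"
    and gamma: "0 < \<gamma>" "\<gamma> < 1"
    and rho0: "prob_space rho0" "sets rho0 = sets borel"
    and r_bounded: "\<exists>B. \<forall>s a s'. \<bar>r s a s'\<bar> \<le> B"
    and homomorphous: "\<forall>s. T s ` A = T' s ` A"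
    and close: "\<forall>s. \<forall>a\<in>A. norm (T s a - T' s a) \<le> eps_m"
    and r_lip: "\<forall>s s'. \<forall>a1\<in>A. \<forall>a2\<in>A. \<bar>r s a1 s' - r s a2 s'\<bar> \<le> lam1 * l1norm (a1 - a2)"
    and T_invlip: "\<forall>s. \<forall>a1\<in>A. \<forall>a2\<in>A. l1norm (a1 - a2) \<le> lam2 * norm (T s a1 - T s a2)"
    and T'_invlip: "\<forall>s. \<forall>a1\<in>A. \<forall>a2\<in>A. l1norm (a1 - a2) \<le> lam2 * norm (T' s a1 - T' s a2)"
    and gap: "action_gap T T' r \<gamma> A > (2 - \<gamma>) * lam1 * lam2 * eps_m / (1 - \<gamma>)"
  shows "\<forall>s. dstat T (pistar T r \<gamma> A) rho0 \<gamma> s = dstat T' (pistar T' r \<gamma> A) rho0 \<gamma> s"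
proof -
  obtain B where B: "\<And>s a s'. \<bar>r s a s'\<bar> \<le> B" using r_bounded by blast
  interpret M: bounded_mdp T r \<gamma> A B using A_ne gamma B by unfold_locales auto
  interpret M': bounded_mdp T' r \<gamma> A B using A_ne gamma B by unfold_locales auto
  have succ: "T s (pistar T r \<gamma> A s) = T' s (pistar T' r \<gamma> A s)" for s
  proof (cases "\<exists>a1\<in>A. \<exists>a2\<in>A. a1 \<noteq> a2")
    case True
    then obtain a1 a2 where a: "a1 \<in> A" "a2 \<in> A" "a1 \<noteq> a2" by blast
    have "0 \<le> lam1" "0 \<le> lam2"
      using nonneg_of_le_mult_l1norm[OF a(3) r_lip[rule_format, OF a(1,2)]]
        nonneg_of_l1norm_le_mult[OF a(3) T_invlip[rule_format, OF a(1,2)] norm_ge_zero] .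
    then interpret homomorphous_mdps T T' r \<gamma> A B eps_m lam1 lam2
      using homomorphous close r_lip T_invlip T'_invlip by unfold_locales auto
    show ?thesis
      using gap gap_threshold_le by (intro greedy_successors_eq) linarith
  next
    \<comment> \<open>With a single action the Lipschitz constants may be negative, but both policies are trivial.\<close>
    case False
    obtain a where "a \<in> A" using A_ne by auto
    with False have "A = {a}" by auto
    then have "pistar T r \<gamma> A s = a" "pistar T' r \<gamma> A s = a"
      by (rule M.pistar_singleton M'.pistar_singleton)+
    then show ?thesis using homomorphous \<open>A = {a}\<close> by auto
  qed
  have "traj T (pistar T r \<gamma> A) s0 t = traj T' (pistar T' r \<gamma> A) s0 t" for s0 t
    by (induction t) (simp_all add: succ)
  then show ?thesis by (simp add: dstat_def)
qed

end
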